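(* Let $n\ge 2$, $N=\{1,\dots,n\}$, for each $i\in N$ let $A_i$ be a nonempty finite set, $A=\prod_{i\in N}A_i$, $u_i:A\to\mathbb{R}$, $u(a)=(u_i(a))_{i\in N}$, let $\Delta\in(0,1]$ and $\lambda\in\mathbb{R}^n\setminus\{\mathbf 0\}$. If $\mathcal{A}^*_\lambda(\Delta)\subseteq S^C$, then for every $u^{[n]}\in\mathcal{U}^*_\lambda(\Delta)$ there exists $m\in\{1,\dots,n-1\}$ such that $$-\sum_{k=1}^m\Delta^{k-1}w_k(u^{[n]})+\sum_{k=1}^m\Delta^{k-1}w_{n-m+k}(u^{[n]})<0.$$
   Context: For $a^{[n]}=(a^1,\dots,a^n)\in A^n$ extend indices by $a^s=a^{s-n}$ for $s\ge n+1$, and define $$v_i^\Delta(a^{[n]})=\frac{\sum_{k=1}^n\Delta^{k-1}u_i(a^{i+k-1})}{\sum_{k=1}^n\Delta^{k-1}},\qquad W_\lambda(a^{[n]},\Delta)=\sum_{i=1}^n\lambda_i v_i^\Delta(a^{[n]}).$$ $\mathcal{A}^*_\lambda(\Delta)\subseteq A^n$ is the set of maximizers of $W_\lambda(\cdot,\Delta)$ over $A^n$, and $\mathcal{U}^*_\lambda(\Delta)=\{(u(a^1),\dots,u(a^n)):(a^1,\dots,a^n)\in\mathcal{A}^*_\lambda(\Delta)\}$. $S^0=\{a^{[n]}\in A^n: u(a^1)=u(a^2)=\dots=u(a^n)\}$ and $S^C=A^n\setminus S^0$. For $u^{[n]}=(u^1,\dots,u^n)$ with $u^k\in\mathbb{R}^n$,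 extend indices by $u^m=u^{m-n}$ for $m>n$ and set $w_k(u^{[n]})=\sum_{i=1}^n\lambda_iu_i^{i+k-1}$ for $k=1,\dots,n$. *)

theory Defs
  imports "HOL-Analysis.Analysis"
begin

(* Players and periods are indexed 1..n. An action profile is an element of
   PiE {1..n} Ai; a sequence a^[n] is an element of PiE {1..n} (\<lambda>_. A).
   Indices s \<ge> n+1 are reduced cyclically via cyc. *)

definition cyc :: "nat \<Rightarrow> nat \<Rightarrow> nat" where
  "cyc n s = (s - 1) mod n + 1"

definition profiles :: "nat \<Rightarrow> (nat \<Rightarrow> 'b set) \<Rightarrow> (nat \<Rightarrow> 'b) set" where
  "profiles n Ai = PiE {1..n} Ai"

definition seqs :: "nat \<Rightarrow> (nat \<Rightarrow> 'b set) \<Rightarrow> (nat \<Rightarrow> (nat \<Rightarrow> 'b)) set" where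
  "seqs n Ai = PiE {1..n} (\<lambda>_. profiles n Ai)"

definition vD :: "nat \<Rightarrow> (nat \<Rightarrow> (nat \<Rightarrow> 'b) \<Rightarrow> real) \<Rightarrow> nat \<Rightarrow> real
                  \<Rightarrow> (nat \<Rightarrow> (nat \<Rightarrow> 'b)) \<Rightarrow> real" where
  "vD n u i \<Delta> as =
     (\<Sum>k=1..n. \<Delta>^(k-1) * u i (as (cyc n (i+k-1)))) / (\<Sum>k=1..n. \<Delta>^(k-1))"

definition W :: "nat \<Rightarrow> (nat \<Rightarrow> (nat \<Rightarrow> 'b) \<Rightarrow> real) \<Rightarrow> (nat \<Rightarrow> real)
                 \<Rightarrow> (nat \<Rightarrow> (nat \<Rightarrow> 'b)) \<Rightarrow> real \<Rightarrow> real" where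
  "W n u lam as \<Delta> = (\<Sum>i=1..n. lam i * vD n u i \<Delta> as)"

definition Astar :: "nat \<Rightarrow> (nat \<Rightarrow> 'b set) \<Rightarrow> (nat \<Rightarrow> (nat \<Rightarrow> 'b) \<Rightarrow> real)
                     \<Rightarrow> (nat \<Rightarrow> real) \<Rightarrow> real \<Rightarrow> (nat \<Rightarrow> (nat \<Rightarrow> 'b)) set" where
  "Astar n Ai u lam \<Delta> =
     {as \<in> seqs n Ai. \<forall>bs \<in> seqs n Ai. W n u lam bs \<Delta> \<le> W n u lam as \<Delta>}"

(* payoff vector sequence u^[n]: U k i = u_i(a^k), for k, i in {1..n} *)
definition payseq :: "nat \<Rightarrow> (nat \<Rightarrow> (nat \<Rightarrow> 'b) \<Rightarrow> real)
                      \<Rightarrow> (nat \<Rightarrow> (nat \<Rightarrow> 'b)) \<Rightarrow> nat \<Rightarrow> nat \<Rightarrow> real" where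
  "payseq n u as = (\<lambda>k\<in>{1..n}. \<lambda>i\<in>{1..n}. u i (as k))"

definition Ustar :: "nat \<Rightarrow> (nat \<Rightarrow> 'b set) \<Rightarrow> (nat \<Rightarrow> (nat \<Rightarrow> 'b) \<Rightarrow> real)
                     \<Rightarrow> (nat \<Rightarrow> real) \<Rightarrow> real \<Rightarrow> (nat \<Rightarrow> nat \<Rightarrow> real) set" where
  "Ustar n Ai u lam \<Delta> = payseq n u ` Astar n Ai u lam \<Delta>"

definition S0 :: "nat \<Rightarrow> (nat \<Rightarrow> 'b set) \<Rightarrow> (nat \<Rightarrow> (nat \<Rightarrow> 'b) \<Rightarrow> real)
                  \<Rightarrow> (nat \<Rightarrow> (nat \<Rightarrow> 'b)) set" where
  "S0 n Ai u = {as \<in> seqs n Ai. \<forall>k\<in>{1..n}. \<forall>l\<in>{1..n}. \<forall>i\<in>{1..n}. u i (as k) = u i (as l)}"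

definition SC :: "nat \<Rightarrow> (nat \<Rightarrow> 'b set) \<Rightarrow> (nat \<Rightarrow> (nat \<Rightarrow> 'b) \<Rightarrow> real)
                  \<Rightarrow> (nat \<Rightarrow> (nat \<Rightarrow> 'b)) set" where
  "SC n Ai u = seqs n Ai - S0 n Ai u"

definition wk :: "nat \<Rightarrow> (nat \<Rightarrow> real) \<Rightarrow> (nat \<Rightarrow> nat \<Rightarrow> real) \<Rightarrow> nat \<Rightarrow> real" where
  "wk n lam U k = (\<Sum>i=1..n. lam i * U (cyc n (i+k-1)) i)"

end

(*
  Let a^[n] be optimal and let f k = w_k(u^[n]) be its stage welfare, an n-periodic sequence.
  The discounted sum V s of f shifted by s is, up to the positive factor sum_k Delta^(k-1),
  the welfare of the rotated sequence, so optimality gives V s <= V 0.  Write g m for the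
  quantity in the conclusion (the gain of moving the last m stages to the front).  Splitting
  the discounted sums at m gives V (n - m) - V 0 = g m - Delta^m g (n - m).  If all gains were
  nonnegative, using this for m and n - m yields g m <= Delta^m g (n - m) <= Delta^n g m <= g m,
  so every rotation is optimal.  But the average of the V s is sum_k Delta^(k-1) times the
  average welfare of the constant sequences built from the a^j, which lie in S^0 and are
  therefore strictly worse than the optimum.
*)
theory Submission
  imports Defs
begin

definition discounted_sum :: "nat \<Rightarrow> real \<Rightarrow> (nat \<Rightarrow> real) \<Rightarrow> real" where
  "discounted_sum n \<Delta> f = (\<Sum>k=1..n. \<Delta>^(k-1) * f k)"

lemma discount_weights_pos:
  fixes \<Delta> :: real
  assumes "0 < \<Delta>" "0 < n"
  shows "0 < (\<Sum>k=1..n. \<Delta>^(k-1))"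
  using assms by (intro sum_pos) auto

lemma sum_shift_periodic:
  fixes f :: "nat \<Rightarrow> 'a::cancel_comm_monoid_add"
  assumes per: "\<And>j. 1 \<le> j \<Longrightarrow> f (j + n) = f j"
  shows "(\<Sum>j=1..n. f (j + s)) = (\<Sum>j=1..n. f j)"
proof (induction s)
  case (Suc s)
  show ?case
  proof (cases "n = 0")
    case False
    have "(\<Sum>j=1..n. f (j + s)) + f (Suc n + s) = f (1 + s) + (\<Sum>j=1..n. f (j + Suc s))"
      using sum.Suc_reindex_ivl[of 1 n "\<lambda>j. f (j + s)"] False by simp
    moreover have "f (Suc n + s) = f (1 + s)"
      using per[of "1 + s"] by (simp add: ac_simps)
    ultimately show ?thesis
      using Suc.IH by (simp add: add.commute)
  qed simp
qed simp

lemma discounted_sum_add: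
  "discounted_sum (m + l) \<Delta> f = discounted_sum m \<Delta> f + \<Delta>^m * discounted_sum l \<Delta> (\<lambda>k. f (m + k))"
proof -
  have "discounted_sum (m + l) \<Delta> f = discounted_sum m \<Delta> f + (\<Sum>k=m+1..m+l. \<Delta>^(k-1) * f k)"
    unfolding discounted_sum_def by (rule sum.ub_add_nat) simp
  also have "(\<Sum>k=m+1..m+l. \<Delta>^(k-1) * f k) = (\<Sum>k=1..l. \<Delta>^(k+m-1) * f (k + m))"
    using sum.shift_bounds_cl_nat_ivl[of _ 1 m l] by (simp add: ac_simps)
  also have "\<dots> = \<Delta>^m * discounted_sum l \<Delta> (\<lambda>k. f (m + k))"
    unfolding discounted_sum_def sum_distrib_left
    by (intro sum.cong refl) (simp add: power_add[symmetric] ac_simps)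
  finally show ?thesis .
qed

lemma sum_discounted_sum_rotations:
  fixes f :: "nat \<Rightarrow> real"
  assumes per: "\<And>j. 1 \<le> j \<Longrightarrow> f (j + n) = f j"
  shows "(\<Sum>s=1..n. discounted_sum n \<Delta> (\<lambda>k. f (k + s))) = (\<Sum>k=1..n. \<Delta>^(k-1)) * (\<Sum>j=1..n. f j)"
proof -
  have "(\<Sum>s=1..n. discounted_sum n \<Delta> (\<lambda>k. f (k + s))) = (\<Sum>k=1..n. \<Delta>^(k-1) * (\<Sum>s=1..n. f (s + k)))"
    unfolding discounted_sum_def sum_distrib_left by (subst sum.swap) (simp add: ac_simps)
  also have "\<dots> = (\<Sum>k=1..n. \<Delta>^(k-1)) * (\<Sum>j=1..n. f j)"
    using sum_shift_periodic[of f n, OF per] by (simp add: sum_distrib_right)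
  finally show ?thesis .
qed

lemma discounted_sum_rotate_diff:
  fixes f :: "nat \<Rightarrow> real"
  assumes per: "\<And>j. 1 \<le> j \<Longrightarrow> f (j + n) = f j" and "m < n"
  shows "discounted_sum n \<Delta> (\<lambda>k. f (k + (n - m))) - discounted_sum n \<Delta> f
       = (discounted_sum m \<Delta> (\<lambda>k. f (n - m + k)) - discounted_sum m \<Delta> f)
         - \<Delta>^m * (discounted_sum (n - m) \<Delta> (\<lambda>k. f (m + k)) - discounted_sum (n - m) \<Delta> f)"
proof -
  have n: "n = m + (n - m)" using \<open>m < n\<close> by simp
  have "discounted_sum (n - m) \<Delta> (\<lambda>k. f (m + k + (n - m))) = discounted_sum (n - m) \<Delta> f"
    unfolding discounted_sum_def using per n by (intro sum.cong refl) (simp add: ac_simps)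
  then have "discounted_sum n \<Delta> (\<lambda>k. f (k + (n - m)))
      = discounted_sum m \<Delta> (\<lambda>k. f (n - m + k)) + \<Delta>^m * discounted_sum (n - m) \<Delta> f"
    using discounted_sum_add[of m "n - m" \<Delta> "\<lambda>k. f (k + (n - m))"] n by (simp add: ac_simps)
  moreover have "discounted_sum n \<Delta> f
      = discounted_sum m \<Delta> f + \<Delta>^m * discounted_sum (n - m) \<Delta> (\<lambda>k. f (m + k))"
    using discounted_sum_add[of m "n - m" \<Delta> f] n by simp
  ultimately show ?thesis by (simp add: right_diff_distrib)
qed

lemma rotation_optimal_if_rotation_gains_nonneg:
  fixes f :: "nat \<Rightarrow> real"
  assumes per: "\<And>j. 1 \<le> j \<Longrightarrow> f (j + n) = f j"
    and \<Delta>: "0 \<le> \<Delta>" "\<Delta> \<le> 1" and m: "1 \<le> m" "m < n"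
    and rot_le: "\<And>s. discounted_sum n \<Delta> (\<lambda>k. f (k + s)) \<le> discounted_sum n \<Delta> f"
    and gain: "\<And>l. l \<in> {1..n-1} \<Longrightarrow> 0 \<le> discounted_sum l \<Delta> (\<lambda>k. f (n - l + k)) - discounted_sum l \<Delta> f"
  shows "discounted_sum n \<Delta> (\<lambda>k. f (k + (n - m))) = discounted_sum n \<Delta> f"
proof -
  define a where "a = discounted_sum m \<Delta> (\<lambda>k. f (n - m + k)) - discounted_sum m \<Delta> f"
  define b where "b = discounted_sum (n - m) \<Delta> (\<lambda>k. f (m + k)) - discounted_sum (n - m) \<Delta> f"
  have nm: "n - (n - m) = m" using m by simp
  have a: "0 \<le> a" unfolding a_def using gain[of m] m by simp
  have "n - m \<in> {1..n-1}" using m by auto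
  then have b: "0 \<le> b" unfolding b_def using gain[of "n - m"] nm by simp
  have diff_m: "discounted_sum n \<Delta> (\<lambda>k. f (k + (n - m))) - discounted_sum n \<Delta> f = a - \<Delta>^m * b"
    using discounted_sum_rotate_diff[where f=f and n=n and m=m, OF per] m unfolding a_def b_def by simp
  have "discounted_sum n \<Delta> (\<lambda>k. f (k + m)) - discounted_sum n \<Delta> f = b - \<Delta>^(n - m) * a"
    using discounted_sum_rotate_diff[where f=f and n=n and m="n - m", OF per] m
    unfolding nm a_def b_def by simp
  then have "b \<le> \<Delta>^(n - m) * a" using rot_le[of m] by simp
  have "a \<le> \<Delta>^m * b" using diff_m rot_le[of "n - m"] by simp
  have "\<Delta>^m * b \<le> \<Delta>^m * (\<Delta>^(n - m) * a)"
    using \<open>b \<le> \<Delta>^(n - m) * a\<close> \<Delta> by (simp add: mult_left_mono)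
  also have "\<dots> \<le> a"
    using \<Delta> a by (simp add: mult_left_le_one_le power_le_one flip: mult.assoc power_add)
  finally have "a = \<Delta>^m * b"
    using \<open>a \<le> \<Delta>^m * b\<close> by simp
  then show ?thesis using diff_m by simp
qed

lemma periodic_exists_negative_rotation_gain:
  fixes f :: "nat \<Rightarrow> real"
  assumes per: "\<And>j. 1 \<le> j \<Longrightarrow> f (j + n) = f j"
    and \<Delta>: "0 \<le> \<Delta>" "\<Delta> \<le> 1"
    and rot_le: "\<And>s. discounted_sum n \<Delta> (\<lambda>k. f (k + s)) \<le> discounted_sum n \<Delta> f"
    and below_avg: "(\<Sum>k=1..n. \<Delta>^(k-1)) * (\<Sum>j=1..n. f j) < real n * discounted_sum n \<Delta> f"
  shows "\<exists>m\<in>{1..n-1}. discounted_sum m \<Delta> (\<lambda>k. f (n - m + k)) - discounted_sum m \<Delta> f < 0"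
proof (rule ccontr)
  assume "\<not> ?thesis"
  then have gain: "\<And>l. l \<in> {1..n-1} \<Longrightarrow> 0 \<le> discounted_sum l \<Delta> (\<lambda>k. f (n - l + k)) - discounted_sum l \<Delta> f"
    by force
  have "discounted_sum n \<Delta> (\<lambda>k. f (k + s)) = discounted_sum n \<Delta> f" if s: "s \<in> {1..n}" for s
  proof (cases "s = n")
    case True
    then show ?thesis unfolding discounted_sum_def using per by (intro sum.cong) auto
  next
    case False
    with s have m: "1 \<le> n - s" "n - s < n" and "n - (n - s) = s" by auto
    then show ?thesis
      using rotation_optimal_if_rotation_gains_nonneg[where f=f and n=n, OF per \<Delta> m rot_le gain]
      by simp
  qed
  then have "(\<Sum>s=1..n. discounted_sum n \<Delta> (\<lambda>k. f (k + s))) = real n * discounted_sum n \<Delta> f"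
    by simp
  then show False
    using below_avg sum_discounted_sum_rotations[of f n \<Delta>] per by simp
qed

lemma cyc_in: "0 < n \<Longrightarrow> cyc n x \<in> {1..n}"
  unfolding cyc_def by (simp add: Suc_leI)

lemma cyc_id: "x \<in> {1..n} \<Longrightarrow> cyc n x = x"
  unfolding cyc_def by auto

lemma cyc_cyc_add: "1 \<le> x \<Longrightarrow> cyc n (cyc n x + s) = cyc n (x + s)"
  unfolding cyc_def by (simp add: mod_add_left_eq)

lemma cyc_add_period:
  assumes "1 \<le> x"
  shows "cyc n (x + n) = cyc n x"
proof -
  have "x + n - 1 = (x - 1) + n" using assms by simp
  then show ?thesis unfolding cyc_def by simp
qed

definition stage_welfare :: "nat \<Rightarrow> (nat \<Rightarrow> (nat \<Rightarrow> 'b) \<Rightarrow> real) \<Rightarrow> (nat \<Rightarrow> real)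
                             \<Rightarrow> (nat \<Rightarrow> (nat \<Rightarrow> 'b)) \<Rightarrow> nat \<Rightarrow> real" where
  "stage_welfare n u lam as k = (\<Sum>i=1..n. lam i * u i (as (cyc n (i + k - 1))))"

lemma W_eq_discounted_sum:
  "W n u lam as \<Delta> = discounted_sum n \<Delta> (stage_welfare n u lam as) / (\<Sum>k=1..n. \<Delta>^(k-1))"
proof -
  have "(\<Sum>i=1..n. lam i * (\<Sum>k=1..n. \<Delta>^(k-1) * u i (as (cyc n (i + k - 1)))))
      = (\<Sum>k=1..n. \<Delta>^(k-1) * (\<Sum>i=1..n. lam i * u i (as (cyc n (i + k - 1)))))"
    unfolding sum_distrib_left by (rule sum.swap[THEN trans]) (simp add: mult.left_commute)
  then show ?thesis
    unfolding W_def vD_def discounted_sum_def stage_welfare_def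
    by (simp add: sum_divide_distrib[symmetric])
qed

lemma wk_payseq:
  assumes "0 < n"
  shows "wk n lam (payseq n u as) k = stage_welfare n u lam as k"
  unfolding wk_def payseq_def stage_welfare_def using cyc_in[OF assms] by (intro sum.cong) auto

lemma stage_welfare_periodic:
  assumes "1 \<le> k"
  shows "stage_welfare n u lam as (k + n) = stage_welfare n u lam as k"
  unfolding stage_welfare_def
proof (intro sum.cong refl)
  fix i assume "i \<in> {1..n}"
  then have "i + (k + n) - 1 = (i + k - 1) + n" "1 \<le> i + k - 1" using assms by auto
  then show "lam i * u i (as (cyc n (i + (k + n) - 1))) = lam i * u i (as (cyc n (i + k - 1)))"
    by (metis cyc_add_period)
qed

lemma sum_stage_welfare:
  assumes "0 < n"
  shows "(\<Sum>k=1..n. stage_welfare n u lam as k) = (\<Sum>j=1..n. \<Sum>i=1..n. lam i * u i (as j))"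
proof -
  have shift: "(\<Sum>k=1..n. u i (as (cyc n (k + (i - 1))))) = (\<Sum>j=1..n. u i (as j))" for i
  proof -
    have "(\<Sum>k=1..n. u i (as (cyc n (k + (i - 1))))) = (\<Sum>j=1..n. u i (as (cyc n j)))"
      by (rule sum_shift_periodic) (simp add: cyc_add_period)
    also have "\<dots> = (\<Sum>j=1..n. u i (as j))" by (intro sum.cong refl) (simp add: cyc_id)
    finally show ?thesis .
  qed
  have "(\<Sum>k=1..n. stage_welfare n u lam as k)
      = (\<Sum>i=1..n. lam i * (\<Sum>k=1..n. u i (as (cyc n (k + (i - 1))))))"
    unfolding stage_welfare_def sum_distrib_left
    by (rule sum.swap[THEN trans]) (intro sum.cong refl, simp add: add.commute)
  also have "\<dots> = (\<Sum>j=1..n. \<Sum>i=1..n. lam i * u i (as j))"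
    unfolding shift sum_distrib_left by (rule sum.swap)
  finally show ?thesis .
qed

definition rotate_seq :: "nat \<Rightarrow> nat \<Rightarrow> (nat \<Rightarrow> 'c) \<Rightarrow> nat \<Rightarrow> 'c" where
  "rotate_seq n s as = (\<lambda>j\<in>{1..n}. as (cyc n (j + s)))"

lemma rotate_seq_in_seqs:
  assumes "0 < n" "as \<in> seqs n Ai"
  shows "rotate_seq n s as \<in> seqs n Ai"
  using assms cyc_in[OF assms(1)] unfolding rotate_seq_def seqs_def by (auto simp: restrict_PiE_iff)

lemma stage_welfare_rotate_seq:
  assumes "0 < n" "1 \<le> k"
  shows "stage_welfare n u lam (rotate_seq n s as) k = stage_welfare n u lam as (k + s)"
  unfolding stage_welfare_def
proof (intro sum.cong refl)
  fix i assume "i \<in> {1..n}"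
  then have "1 \<le> i + k - 1" "i + k - 1 + s = i + (k + s) - 1" using assms(2) by auto
  then show "lam i * u i (rotate_seq n s as (cyc n (i + k - 1))) = lam i * u i (as (cyc n (i + (k + s) - 1)))"
    unfolding rotate_seq_def using cyc_in[OF assms(1)] by (simp add: cyc_cyc_add)
qed

lemma const_seq_in_S0:
  assumes "a \<in> profiles n Ai"
  shows "(\<lambda>_\<in>{1..n}. a) \<in> S0 n Ai u"
  using assms unfolding S0_def seqs_def by auto

lemma W_const_seq:
  assumes "0 < n" "0 < \<Delta>"
  shows "W n u lam (\<lambda>_\<in>{1..n}. a) \<Delta> = (\<Sum>i=1..n. lam i * u i a)"
proof -
  have "stage_welfare n u lam (\<lambda>_\<in>{1..n}. a) k = (\<Sum>i=1..n. lam i * u i a)" for k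
    unfolding stage_welfare_def using cyc_in[OF assms(1)] by simp
  then show ?thesis
    using discount_weights_pos[OF assms(2,1)] unfolding W_eq_discounted_sum discounted_sum_def
    by (simp flip: sum_distrib_right)
qed

lemma W_less_if_not_in_Astar:
  assumes "as \<in> Astar n Ai u lam \<Delta>" "bs \<in> seqs n Ai" "bs \<notin> Astar n Ai u lam \<Delta>"
  shows "W n u lam bs \<Delta> < W n u lam as \<Delta>"
proof -
  obtain cs where "cs \<in> seqs n Ai" "W n u lam bs \<Delta> < W n u lam cs \<Delta>"
    using assms(2,3) unfolding Astar_def by force
  moreover have "W n u lam cs \<Delta> \<le> W n u lam as \<Delta>"
    using assms(1) \<open>cs \<in> seqs n Ai\<close> unfolding Astar_def by blast
  ultimately show ?thesis by simp
qed

lemma discounted_sum_rotation_le_if_in_Astar: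
  assumes "as \<in> Astar n Ai u lam \<Delta>" "0 < n" "0 < \<Delta>"
  shows "discounted_sum n \<Delta> (\<lambda>k. stage_welfare n u lam as (k + s))
           \<le> discounted_sum n \<Delta> (stage_welfare n u lam as)"
proof -
  have "as \<in> seqs n Ai" using assms(1) unfolding Astar_def by simp
  then have "W n u lam (rotate_seq n s as) \<Delta> \<le> W n u lam as \<Delta>"
    using assms(1) rotate_seq_in_seqs[OF assms(2)] unfolding Astar_def by blast
  moreover have "discounted_sum n \<Delta> (stage_welfare n u lam (rotate_seq n s as))
      = discounted_sum n \<Delta> (\<lambda>k. stage_welfare n u lam as (k + s))"
    unfolding discounted_sum_def by (intro sum.cong refl) (simp add: stage_welfare_rotate_seq[OF assms(2)])
  ultimately show ?thesis
    using discount_weights_pos[OF assms(3,2)] unfolding W_eq_discounted_sum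
    by (simp add: divide_le_cancel)
qed

lemma sum_stage_welfare_below_average_if_in_Astar:
  assumes "as \<in> Astar n Ai u lam \<Delta>" "Astar n Ai u lam \<Delta> \<subseteq> SC n Ai u" "0 < n" "0 < \<Delta>"
  shows "(\<Sum>k=1..n. \<Delta>^(k-1)) * (\<Sum>j=1..n. stage_welfare n u lam as j)
           < real n * discounted_sum n \<Delta> (stage_welfare n u lam as)"
proof -
  have const_less: "(\<Sum>i=1..n. lam i * u i (as j)) < W n u lam as \<Delta>" if "j \<in> {1..n}" for j
  proof -
    have "as j \<in> profiles n Ai" using assms(1) that unfolding Astar_def seqs_def by auto
    then have "(\<lambda>_\<in>{1..n}. as j) \<in> seqs n Ai - Astar n Ai u lam \<Delta>"
      using const_seq_in_S0 assms(2) unfolding S0_def SC_def by blast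
    then have "W n u lam (\<lambda>_\<in>{1..n}. as j) \<Delta> < W n u lam as \<Delta>"
      using W_less_if_not_in_Astar[OF assms(1)] by blast
    then show ?thesis unfolding W_const_seq[OF assms(3,4)] .
  qed
  have "(\<Sum>j=1..n. stage_welfare n u lam as j) < real n * W n u lam as \<Delta>"
    unfolding sum_stage_welfare[OF assms(3)]
    using sum_strict_mono[OF _ _ const_less, of "{1..n}"] assms(3) by simp
  then show ?thesis
    using discount_weights_pos[OF assms(4,3)] unfolding W_eq_discounted_sum by (simp add: field_simps)
qed

theorem lemma5:
  fixes n :: nat and Ai :: "nat \<Rightarrow> 'b set"
    and u :: "nat \<Rightarrow> (nat \<Rightarrow> 'b) \<Rightarrow> real"
    and lam :: "nat \<Rightarrow> real" and \<Delta> :: real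
  assumes "n \<ge> 2"
    and "\<And>i. i \<in> {1..n} \<Longrightarrow> Ai i \<noteq> {} \<and> finite (Ai i)"
    and "0 < \<Delta>" and "\<Delta> \<le> 1"
    and "\<exists>i\<in>{1..n}. lam i \<noteq> 0"
    and "Astar n Ai u lam \<Delta> \<subseteq> SC n Ai u"
  shows "\<forall>U \<in> Ustar n Ai u lam \<Delta>. \<exists>m\<in>{1..n-1}.
           - (\<Sum>k=1..m. \<Delta>^(k-1) * wk n lam U k)
           + (\<Sum>k=1..m. \<Delta>^(k-1) * wk n lam U (n-m+k)) < 0"
proof
  fix U assume "U \<in> Ustar n Ai u lam \<Delta>"
  then obtain as where as: "as \<in> Astar n Ai u lam \<Delta>" and U: "U = payseq n u as"
    unfolding Ustar_def by auto
  have n: "0 < n" using assms(1) by simp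
  have "\<exists>m\<in>{1..n-1}. discounted_sum m \<Delta> (\<lambda>k. stage_welfare n u lam as (n - m + k))
                       - discounted_sum m \<Delta> (stage_welfare n u lam as) < 0"
    using assms(3,4) stage_welfare_periodic
      discounted_sum_rotation_le_if_in_Astar[OF as n assms(3)]
      sum_stage_welfare_below_average_if_in_Astar[OF as assms(6) n assms(3)]
    by (intro periodic_exists_negative_rotation_gain) auto
  then show "\<exists>m\<in>{1..n-1}. - (\<Sum>k=1..m. \<Delta>^(k-1) * wk n lam U k)
           + (\<Sum>k=1..m. \<Delta>^(k-1) * wk n lam U (n-m+k)) < 0"
    unfolding U wk_payseq[OF n] discounted_sum_def by auto
qed

end
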